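(* Let $\Lambda$ be a level-sentence set for a language $\mathcal L$. Let $A$ be a set of first-order $\mathcal L$-sentences and $\phi$ an $\mathcal L$-sentence such that $A\not\vdash\phi\leftrightarrow\psi$ for every $\psi\in\neg\Lambda$. Then there are complete consistent theories $T^+\supseteq A\cup\{\phi\}$ and $T^-\supseteq A\cup\{\neg\phi\}$ such that $\Lambda\cap T^-\subseteq\Lambda\cap T^+$. Furthermore, if $T$ is any theory consistent with $A\cup\{\phi\}\cup\mathrm{Th}_\Lambda(A\cup\{\neg\phi\})$, then $T^+$ can be chosen to contain $T$.
   Context: A level-sentence set for $\mathcal L$ is either the set of all $\exists_n$-sentences or the set of all $\forall_n$-sentences of $\mathcal L$, for some $n$ (prenex sentences with $n$ alternating quantifier blocks starting with $\exists$, resp. $\forall$). For a level-sentence set $\Lambda$, $\neg\Lambda$ is the set of sentences logically equivalent to the negation of a sentence in $\Lambda$. For a theory $T$, $\mathrm{Th}_\Lambda(T)=\Lambda\cap\overline T$, where $\overline T$ is the deductive closure of $T$. Complete theories are taken deductively closed. *)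

theory Defs
  imports Main
begin

text \<open>'f: function/constant symbols, 'p: relation symbols of the language L.
Equality is a logical symbol.\<close>

datatype 'f trm = Var nat | Fun 'f "'f trm list"

datatype ('f, 'p) fm =
    Bot
  | Atom 'p "'f trm list"
  | Eq "'f trm" "'f trm"
  | Neg "('f, 'p) fm"
  | Conj "('f, 'p) fm" "('f, 'p) fm"
  | Disj "('f, 'p) fm" "('f, 'p) fm"
  | Imp "('f, 'p) fm" "('f, 'p) fm"
  | Ex "('f, 'p) fm"
  | All "('f, 'p) fm"

definition Iff :: "('f, 'p) fm \<Rightarrow> ('f, 'p) fm \<Rightarrow> ('f, 'p) fm" where
  "Iff a b = Conj (Imp a b) (Imp b a)"

fun liftt :: "nat \<Rightarrow> 'f trm \<Rightarrow> 'f trm" where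
  "liftt k (Var i) = (if i < k then Var i else Var (Suc i))"
| "liftt k (Fun f ts) = Fun f (map (liftt k) ts)"

fun liftf :: "nat \<Rightarrow> ('f, 'p) fm \<Rightarrow> ('f, 'p) fm" where
  "liftf k Bot = Bot"
| "liftf k (Atom p ts) = Atom p (map (liftt k) ts)"
| "liftf k (Eq s t) = Eq (liftt k s) (liftt k t)"
| "liftf k (Neg a) = Neg (liftf k a)"
| "liftf k (Conj a b) = Conj (liftf k a) (liftf k b)"
| "liftf k (Disj a b) = Disj (liftf k a) (liftf k b)"
| "liftf k (Imp a b) = Imp (liftf k a) (liftf k b)"
| "liftf k (Ex a) = Ex (liftf (Suc k) a)"
| "liftf k (All a) = All (liftf (Suc k) a)"

fun substt :: "nat \<Rightarrow> 'f trm \<Rightarrow> 'f trm \<Rightarrow> 'f trm" where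
  "substt k s (Var i) = (if i < k then Var i else if i = k then s else Var (i - 1))"
| "substt k s (Fun f ts) = Fun f (map (substt k s) ts)"

fun substf :: "nat \<Rightarrow> 'f trm \<Rightarrow> ('f, 'p) fm \<Rightarrow> ('f, 'p) fm" where
  "substf k s Bot = Bot"
| "substf k s (Atom p ts) = Atom p (map (substt k s) ts)"
| "substf k s (Eq t u) = Eq (substt k s t) (substt k s u)"
| "substf k s (Neg a) = Neg (substf k s a)"
| "substf k s (Conj a b) = Conj (substf k s a) (substf k s b)"
| "substf k s (Disj a b) = Disj (substf k s a) (substf k s b)"
| "substf k s (Imp a b) = Imp (substf k s a) (substf k s b)"
| "substf k s (Ex a) = Ex (substf (Suc k) (liftt 0 s) a)"
| "substf k s (All a) = All (substf (Suc k) (liftt 0 s) a)"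

fun closedt :: "nat \<Rightarrow> 'f trm \<Rightarrow> bool" where
  "closedt k (Var i) = (i < k)"
| "closedt k (Fun f ts) = (\<forall>t\<in>set ts. closedt k t)"

fun closedf :: "nat \<Rightarrow> ('f, 'p) fm \<Rightarrow> bool" where
  "closedf k Bot = True"
| "closedf k (Atom p ts) = (\<forall>t\<in>set ts. closedt k t)"
| "closedf k (Eq s t) = (closedt k s \<and> closedt k t)"
| "closedf k (Neg a) = closedf k a"
| "closedf k (Conj a b) = (closedf k a \<and> closedf k b)"
| "closedf k (Disj a b) = (closedf k a \<and> closedf k b)"
| "closedf k (Imp a b) = (closedf k a \<and> closedf k b)"
| "closedf k (Ex a) = closedf (Suc k) a"
| "closedf k (All a) = closedf (Suc k) a"

definition sentence :: "('f, 'p) fm \<Rightarrow> bool" where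
  "sentence a = closedf 0 a"

inductive nd :: "('f, 'p) fm list \<Rightarrow> ('f, 'p) fm \<Rightarrow> bool" (infix "\<turnstile>\<^sub>L" 50) where
  Assum: "a \<in> set G \<Longrightarrow> G \<turnstile>\<^sub>L a"
| BotE: "G \<turnstile>\<^sub>L Bot \<Longrightarrow> G \<turnstile>\<^sub>L a"
| Classical: "Neg a # G \<turnstile>\<^sub>L Bot \<Longrightarrow> G \<turnstile>\<^sub>L a"
| NegI: "a # G \<turnstile>\<^sub>L Bot \<Longrightarrow> G \<turnstile>\<^sub>L Neg a"
| NegE: "G \<turnstile>\<^sub>L Neg a \<Longrightarrow> G \<turnstile>\<^sub>L a \<Longrightarrow> G \<turnstile>\<^sub>L Bot"
| ConjI: "G \<turnstile>\<^sub>L a \<Longrightarrow> G \<turnstile>\<^sub>L b \<Longrightarrow> G \<turnstile>\<^sub>L Conj a b"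
| ConjE1: "G \<turnstile>\<^sub>L Conj a b \<Longrightarrow> G \<turnstile>\<^sub>L a"
| ConjE2: "G \<turnstile>\<^sub>L Conj a b \<Longrightarrow> G \<turnstile>\<^sub>L b"
| DisjI1: "G \<turnstile>\<^sub>L a \<Longrightarrow> G \<turnstile>\<^sub>L Disj a b"
| DisjI2: "G \<turnstile>\<^sub>L b \<Longrightarrow> G \<turnstile>\<^sub>L Disj a b"
| DisjE: "G \<turnstile>\<^sub>L Disj a b \<Longrightarrow> a # G \<turnstile>\<^sub>L c \<Longrightarrow> b # G \<turnstile>\<^sub>L c \<Longrightarrow> G \<turnstile>\<^sub>L c"
| ImpI: "a # G \<turnstile>\<^sub>L b \<Longrightarrow> G \<turnstile>\<^sub>L Imp a b"
| ImpE: "G \<turnstile>\<^sub>L Imp a b \<Longrightarrow> G \<turnstile>\<^sub>L a \<Longrightarrow> G \<turnstile>\<^sub>L b"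
| AllI: "map (liftf 0) G \<turnstile>\<^sub>L a \<Longrightarrow> G \<turnstile>\<^sub>L All a"
| AllE: "G \<turnstile>\<^sub>L All a \<Longrightarrow> G \<turnstile>\<^sub>L substf 0 t a"
| ExI: "G \<turnstile>\<^sub>L substf 0 t a \<Longrightarrow> G \<turnstile>\<^sub>L Ex a"
| ExE: "G \<turnstile>\<^sub>L Ex a \<Longrightarrow> a # map (liftf 0) G \<turnstile>\<^sub>L liftf 0 b \<Longrightarrow> G \<turnstile>\<^sub>L b"
| Refl: "G \<turnstile>\<^sub>L Eq t t"
| Subst: "G \<turnstile>\<^sub>L Eq s t \<Longrightarrow> G \<turnstile>\<^sub>L substf 0 s a \<Longrightarrow> G \<turnstile>\<^sub>L substf 0 t a"

definition proves :: "('f, 'p) fm set \<Rightarrow> ('f, 'p) fm \<Rightarrow> bool" (infix "\<turnstile>" 50) where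
  "A \<turnstile> a \<longleftrightarrow> (\<exists>G. set G \<subseteq> A \<and> G \<turnstile>\<^sub>L a)"

definition ded_closure :: "('f, 'p) fm set \<Rightarrow> ('f, 'p) fm set" where
  "ded_closure T = {a. sentence a \<and> T \<turnstile> a}"

definition consistent :: "('f, 'p) fm set \<Rightarrow> bool" where
  "consistent T \<longleftrightarrow> \<not> T \<turnstile> Bot"

definition is_theory :: "('f, 'p) fm set \<Rightarrow> bool" where
  "is_theory T \<longleftrightarrow> (\<forall>a\<in>T. sentence a)"

definition complete_consistent_theory :: "('f, 'p) fm set \<Rightarrow> bool" where
  "complete_consistent_theory T \<longleftrightarrow>
     is_theory T \<and> ded_closure T = T \<and> consistent T \<and>
     (\<forall>a. sentence a \<longrightarrow> a \<in> T \<or> Neg a \<in> T)"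

fun qfree :: "('f, 'p) fm \<Rightarrow> bool" where
  "qfree (Ex a) = False"
| "qfree (All a) = False"
| "qfree (Neg a) = qfree a"
| "qfree (Conj a b) = (qfree a \<and> qfree b)"
| "qfree (Disj a b) = (qfree a \<and> qfree b)"
| "qfree (Imp a b) = (qfree a \<and> qfree b)"
| "qfree _ = True"

text \<open>level True n a: a is an \<exists>_n prenex formula; level False n a: a is \<forall>_n.
 Quantifier blocks may be empty (standard convention).\<close>
fun level :: "bool \<Rightarrow> nat \<Rightarrow> ('f, 'p) fm \<Rightarrow> bool" where
  "level b 0 a = qfree a"
| "level True (Suc n) a = (\<exists>k c. a = (Ex ^^ k) c \<and> level False n c)"
| "level False (Suc n) a = (\<exists>k c. a = (All ^^ k) c \<and> level True n c)"

definition level_sentences :: "bool \<Rightarrow> nat \<Rightarrow> ('f, 'p) fm set" where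
  "level_sentences b n = {a. sentence a \<and> level b n a}"

definition neg_set :: "('f, 'p) fm set \<Rightarrow> ('f, 'p) fm set" where
  "neg_set L = {c. sentence c \<and> (\<exists>a\<in>L. {} \<turnstile> Iff c (Neg a))}"

definition Th :: "('f, 'p) fm set \<Rightarrow> ('f, 'p) fm set \<Rightarrow> ('f, 'p) fm set" where
  "Th L T = L \<inter> ded_closure T"

end

theory Submission
  imports Defs
begin

text \<open>Put \<open>S = T \<union> A \<union> {\<phi>}\<close>. Complete \<open>A \<union> {\<not>\<phi>}\<close> together with the negations of all
\<open>\<Lambda>\<close>-sentences refuted by \<open>S\<close> to a complete theory \<open>T\<^sup>-\<close>; then \<open>S \<union> (\<Lambda> \<inter> T\<^sup>-)\<close> is consistent,
and any completion \<open>T\<^sup>+\<close> of it does the job. By compactness both consistency claims come down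
to a single \<open>\<Lambda>\<close>-sentence, since \<open>\<Lambda>\<close> is closed under finite conjunctions and disjunctions
up to logical equivalence (by the prenex operations). For \<open>T = {}\<close> the consistency hypothesis
follows from the one on \<open>\<phi>\<close>: a refutation would make \<open>\<phi>\<close> equivalent over \<open>A\<close> to the
negation of a \<open>\<Lambda>\<close>-sentence.\<close>

lemma nd_weaken: "G \<turnstile>\<^sub>L a \<Longrightarrow> set G \<subseteq> set H \<Longrightarrow> H \<turnstile>\<^sub>L a"
proof (induction G a arbitrary: H rule: nd.induct)
  case (AllI G a)
  then show ?case by (metis image_mono list.set_map nd.AllI)
next
  case (ExE G a b)
  have "set (a # map (liftf 0) G) \<subseteq> set (a # map (liftf 0) H)" using ExE.prems by auto
  then show ?case using ExE by (blast intro: nd.ExE)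
next
  case (Classical a G)
  show ?case by (rule nd.Classical) (use Classical.IH[of "Neg a # H"] Classical.prems in auto)
next
  case (NegI a G)
  show ?case by (rule nd.NegI) (use NegI.IH[of "a # H"] NegI.prems in auto)
next
  case (DisjE G a b c)
  show ?case
    by (rule nd.DisjE[of _ a b])
      (use DisjE.IH(1)[of H] DisjE.IH(2)[of "a # H"] DisjE.IH(3)[of "b # H"] DisjE.prems in auto)
next
  case (ImpI a G b)
  show ?case by (rule nd.ImpI) (use ImpI.IH[of "a # H"] ImpI.prems in auto)
next
  case (NegE G a)
  then show ?case by (blast intro: nd.NegE)
next
  case (Subst G s t a)
  then show ?case by (blast intro: nd.Subst)
qed (auto intro: nd.intros)

lemma nd_cut: "G \<turnstile>\<^sub>L a \<Longrightarrow> \<forall>g\<in>set G. H \<turnstile>\<^sub>L g \<Longrightarrow> H \<turnstile>\<^sub>L a"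
proof (induction G arbitrary: a)
  case Nil
  then show ?case using nd_weaken by fastforce
next
  case (Cons g G)
  have "G \<turnstile>\<^sub>L Imp g a" using Cons.prems(1) by (rule ImpI)
  then have "H \<turnstile>\<^sub>L Imp g a" using Cons by auto
  then show ?case using Cons.prems(2) by (auto intro: ImpE)
qed

lemma nd_cut1: "[x] \<turnstile>\<^sub>L a \<Longrightarrow> H \<turnstile>\<^sub>L x \<Longrightarrow> H \<turnstile>\<^sub>L a"
  using nd_cut by fastforce

lemma nd_hd: "a # G \<turnstile>\<^sub>L a"
  by (rule Assum) simp

lemma nd_Neg_Bot: "G \<turnstile>\<^sub>L Neg Bot"
  by (rule NegI, rule nd_hd)

lemma nd_Neg_Disj:
  assumes "H \<turnstile>\<^sub>L Neg a" "H \<turnstile>\<^sub>L Neg b"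
  shows "H \<turnstile>\<^sub>L Neg (Disj a b)"
proof (rule NegI)
  show "Disj a b # H \<turnstile>\<^sub>L Bot"
  proof (rule DisjE[OF nd_hd])
    show "a # Disj a b # H \<turnstile>\<^sub>L Bot"
      by (rule NegE[of _ a], rule nd_weaken[OF assms(1)], auto intro: nd_hd)
    show "b # Disj a b # H \<turnstile>\<^sub>L Bot"
      by (rule NegE[of _ b], rule nd_weaken[OF assms(2)], auto intro: nd_hd)
  qed
qed

lemma nd_Neg_DisjD1: "H \<turnstile>\<^sub>L Neg (Disj a b) \<Longrightarrow> H \<turnstile>\<^sub>L Neg a"
  by (rule NegI, rule NegE[of _ "Disj a b"], rule nd_weaken, assumption, auto intro: DisjI1 nd_hd)

lemma nd_Neg_DisjD2: "H \<turnstile>\<^sub>L Neg (Disj a b) \<Longrightarrow> H \<turnstile>\<^sub>L Neg b"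
  by (rule NegI, rule NegE[of _ "Disj a b"], rule nd_weaken, assumption, auto intro: DisjI2 nd_hd)

definition eqv :: "('f, 'p) fm \<Rightarrow> ('f, 'p) fm \<Rightarrow> bool" where
  "eqv a b \<longleftrightarrow> (\<forall>G. G \<turnstile>\<^sub>L a \<longleftrightarrow> G \<turnstile>\<^sub>L b)"

lemma eqvI: "[a] \<turnstile>\<^sub>L b \<Longrightarrow> [b] \<turnstile>\<^sub>L a \<Longrightarrow> eqv a b"
  unfolding eqv_def using nd_cut1 by blast

lemma eqvD: "eqv a b \<Longrightarrow> G \<turnstile>\<^sub>L a \<Longrightarrow> G \<turnstile>\<^sub>L b"
  by (simp add: eqv_def)

lemma eqv_refl: "eqv a a"
  by (simp add: eqv_def)

lemma eqv_sym: "eqv a b \<Longrightarrow> eqv b a"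
  by (simp add: eqv_def)

lemma eqv_trans [trans]: "eqv a b \<Longrightarrow> eqv b c \<Longrightarrow> eqv a c"
  by (simp add: eqv_def)

lemma eqv_congI: "(\<And>a b. eqv a b \<Longrightarrow> [F a] \<turnstile>\<^sub>L F b) \<Longrightarrow> eqv a b \<Longrightarrow> eqv (F a) (F b)"
  by (blast intro: eqvI eqv_sym)

lemma substt_Var_liftt: "substt k (Var k) (liftt (Suc k) t) = t"
  by (induction t) (auto simp: map_idI)

lemma substf_Var_liftf [simp]: "substf k (Var k) (liftf (Suc k) a) = a"
  by (induction a arbitrary: k) (auto simp: substt_Var_liftt map_idI)

lemma substt_liftt: "substt k s (liftt k t) = t"
  by (induction t) (auto simp: map_idI)

lemma substf_liftf [simp]: "substf k s (liftf k a) = a"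
  by (induction a arbitrary: k s) (auto simp: substt_liftt map_idI)

lemma eqv_Neg:
  assumes "eqv a b"
  shows "eqv (Neg a) (Neg b)"
proof (rule eqv_congI[where F=Neg, OF _ assms])
  fix a b :: "('f, 'p) fm"
  assume "eqv a b"
  then have "[b, Neg a] \<turnstile>\<^sub>L a"
    using eqvD[OF eqv_sym] nd_hd by blast
  then show "[Neg a] \<turnstile>\<^sub>L Neg b"
    by (intro NegI NegE[of _ a, OF Assum]) simp_all
qed

lemma eqv_Conj: "eqv a b \<Longrightarrow> eqv (Conj a c) (Conj b c)"
  by (rule eqvI; rule ConjI; metis ConjE1 ConjE2 nd_hd eqvD eqv_sym)

lemma eqv_Disj: "eqv a b \<Longrightarrow> eqv (Disj a c) (Disj b c)"
proof (rule eqvI)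
  assume e: "eqv a b"
  show "[Disj a c] \<turnstile>\<^sub>L Disj b c"
    by (rule DisjE[OF nd_hd]) (metis DisjI1 DisjI2 nd_hd eqvD e)+
  show "[Disj b c] \<turnstile>\<^sub>L Disj a c"
    by (rule DisjE[OF nd_hd]) (metis DisjI1 DisjI2 nd_hd eqvD eqv_sym e)+
qed

lemma eqv_Ex:
  assumes "eqv a b"
  shows "eqv (Ex a) (Ex b)"
proof (rule eqv_congI[where F=Ex, OF _ assms])
  fix a b :: "('f, 'p) fm"
  assume "eqv a b"
  then have "a # map (liftf 0) [Ex a] \<turnstile>\<^sub>L b"
    using eqvD nd_hd by blast
  then show "[Ex a] \<turnstile>\<^sub>L Ex b"
    using ExI[where t="Var 0" and a="liftf 1 b"] by (intro ExE[OF nd_hd]) simp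
qed

lemma eqv_All:
  assumes "eqv a b"
  shows "eqv (All a) (All b)"
proof (rule eqv_congI[where F=All, OF _ assms])
  fix a b :: "('f, 'p) fm"
  assume "eqv a b"
  moreover have "[All (liftf 1 a)] \<turnstile>\<^sub>L a"
    using AllE[OF nd_hd, where t="Var 0" and a="liftf 1 a"] by simp
  ultimately show "[All a] \<turnstile>\<^sub>L All b"
    by (intro AllI) (simp add: eqvD[of a b])
qed

lemma Conj_commute_eqv: "eqv (Conj a c) (Conj c a)"
  by (rule eqvI; metis ConjI ConjE1 ConjE2 nd_hd)

lemma Disj_commute_eqv: "eqv (Disj a c) (Disj c a)"
  by (rule eqvI; rule DisjE[OF nd_hd]; metis DisjI1 DisjI2 nd_hd)


lemma Conj_Ex_eqv: "eqv (Conj (Ex a) c) (Ex (Conj a (liftf 0 c)))"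
proof (rule eqvI)
  show "[Conj (Ex a) c] \<turnstile>\<^sub>L Ex (Conj a (liftf 0 c))"
  proof (rule ExE[OF ConjE1[OF nd_hd]])
    have "a # [Conj (Ex (liftf 1 a)) (liftf 0 c)] \<turnstile>\<^sub>L Conj a (liftf 0 c)"
      by (rule ConjI, rule nd_hd, rule ConjE2[OF Assum, of "Ex (liftf 1 a)" "liftf 0 c"]) simp
    then show "a # map (liftf 0) [Conj (Ex a) c] \<turnstile>\<^sub>L liftf 0 (Ex (Conj a (liftf 0 c)))"
      using ExI[where t="Var 0" and a="Conj (liftf 1 a) (liftf 1 (liftf 0 c))"] by simp
  qed
  show "[Ex (Conj a (liftf 0 c))] \<turnstile>\<^sub>L Conj (Ex a) c"
  proof (rule ConjI)
    show "[Ex (Conj a (liftf 0 c))] \<turnstile>\<^sub>L Ex a"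
    proof (rule ExE[OF nd_hd])
      show "Conj a (liftf 0 c) # map (liftf 0) [Ex (Conj a (liftf 0 c))] \<turnstile>\<^sub>L liftf 0 (Ex a)"
        using ExI[where t="Var 0" and a="liftf 1 a"] ConjE1[OF nd_hd] by (simp, blast)
    qed
    show "[Ex (Conj a (liftf 0 c))] \<turnstile>\<^sub>L c"
      by (rule ExE[OF nd_hd], rule ConjE2[OF nd_hd])
  qed
qed

lemma Disj_Ex_eqv: "eqv (Disj (Ex a) c) (Ex (Disj a (liftf 0 c)))"
proof (rule eqvI)
  show "[Disj (Ex a) c] \<turnstile>\<^sub>L Ex (Disj a (liftf 0 c))"
  proof (rule DisjE[OF nd_hd])
    show "[Ex a, Disj (Ex a) c] \<turnstile>\<^sub>L Ex (Disj a (liftf 0 c))"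
    proof (rule ExE[OF nd_hd])
      have "a # map (liftf 0) [Ex a, Disj (Ex a) c] \<turnstile>\<^sub>L Disj a (liftf 0 c)"
        by (rule DisjI1, rule nd_hd)
      then show "a # map (liftf 0) [Ex a, Disj (Ex a) c] \<turnstile>\<^sub>L liftf 0 (Ex (Disj a (liftf 0 c)))"
        using ExI[where t="Var 0" and a="Disj (liftf 1 a) (liftf 1 (liftf 0 c))"] by simp
    qed
    show "[c, Disj (Ex a) c] \<turnstile>\<^sub>L Ex (Disj a (liftf 0 c))"
      using ExI[where t="Var 0" and a="Disj a (liftf 0 c)"] DisjI2[OF nd_hd, of c _ "substf 0 (Var 0) a"]
      by simp
  qed
  show "[Ex (Disj a (liftf 0 c))] \<turnstile>\<^sub>L Disj (Ex a) c"
  proof (rule ExE[OF nd_hd])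
    let ?G = "Disj a (liftf 0 c) # map (liftf 0) [Ex (Disj a (liftf 0 c))]"
    have "?G \<turnstile>\<^sub>L Disj (Ex (liftf 1 a)) (liftf 0 c)"
    proof (rule DisjE[OF nd_hd])
      show "a # ?G \<turnstile>\<^sub>L Disj (Ex (liftf 1 a)) (liftf 0 c)"
        using ExI[where t="Var 0" and a="liftf 1 a", of "a # ?G"] nd_hd[of a ?G]
        by (intro DisjI1) simp
      show "liftf 0 c # ?G \<turnstile>\<^sub>L Disj (Ex (liftf 1 a)) (liftf 0 c)"
        by (rule DisjI2, rule nd_hd)
    qed
    then show "?G \<turnstile>\<^sub>L liftf 0 (Disj (Ex a) c)"
      by simp
  qed
qed

lemma Conj_All_eqv: "eqv (Conj (All a) c) (All (Conj a (liftf 0 c)))"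
proof (rule eqvI)
  show "[Conj (All a) c] \<turnstile>\<^sub>L All (Conj a (liftf 0 c))"
  proof (rule AllI)
    have "[Conj (All (liftf 1 a)) (liftf 0 c)] \<turnstile>\<^sub>L Conj a (liftf 0 c)"
      using AllE[OF ConjE1[OF nd_hd], where t="Var 0" and a="liftf 1 a"] ConjE2[OF nd_hd]
      by (intro ConjI) simp_all
    then show "map (liftf 0) [Conj (All a) c] \<turnstile>\<^sub>L Conj a (liftf 0 c)"
      by simp
  qed
  show "[All (Conj a (liftf 0 c))] \<turnstile>\<^sub>L Conj (All a) c"
  proof (rule ConjI)
    show "[All (Conj a (liftf 0 c))] \<turnstile>\<^sub>L All a"
      using ConjE1 AllE[OF nd_hd, where t="Var 0" and a="Conj (liftf 1 a) (liftf 1 (liftf 0 c))"]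
      by (intro AllI) (simp, blast)
    show "[All (Conj a (liftf 0 c))] \<turnstile>\<^sub>L c"
      using ConjE2 AllE[OF nd_hd, where t="Var 0" and a="Conj a (liftf 0 c)"] by (simp, blast)
  qed
qed

lemma Disj_All_eqv: "eqv (Disj (All a) c) (All (Disj a (liftf 0 c)))"
proof (rule eqvI)
  show "[Disj (All a) c] \<turnstile>\<^sub>L All (Disj a (liftf 0 c))"
  proof (rule AllI)
    have "[Disj (All (liftf 1 a)) (liftf 0 c)] \<turnstile>\<^sub>L Disj a (liftf 0 c)"
    proof (rule DisjE[OF nd_hd])
      show "[All (liftf 1 a), Disj (All (liftf 1 a)) (liftf 0 c)] \<turnstile>\<^sub>L Disj a (liftf 0 c)"
        using AllE[OF nd_hd, where t="Var 0" and a="liftf 1 a"] by (intro DisjI1) simp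
      show "[liftf 0 c, Disj (All (liftf 1 a)) (liftf 0 c)] \<turnstile>\<^sub>L Disj a (liftf 0 c)"
        by (rule DisjI2, rule nd_hd)
    qed
    then show "map (liftf 0) [Disj (All a) c] \<turnstile>\<^sub>L Disj a (liftf 0 c)"
      by simp
  qed
  show "[All (Disj a (liftf 0 c))] \<turnstile>\<^sub>L Disj (All a) c"
  proof (rule Classical)
    let ?H = "[Neg (Disj (All a) c), All (Disj a (liftf 0 c))]"
    let ?H' = "map (liftf 0) ?H"
    have "?H' \<turnstile>\<^sub>L Disj a (liftf 0 c)"
      using AllE[OF Assum, of "Disj (liftf 1 a) (liftf 1 (liftf 0 c))" ?H' "Var 0"] by simp
    then have "?H' \<turnstile>\<^sub>L a"
    proof (rule DisjE)
      show "a # ?H' \<turnstile>\<^sub>L a"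
        by (rule nd_hd)
      show "liftf 0 c # ?H' \<turnstile>\<^sub>L a"
        by (rule BotE, rule NegE[OF Assum, of "Disj (All (liftf 1 a)) (liftf 0 c)"], simp,
            rule DisjI2, rule nd_hd)
    qed
    then have "?H \<turnstile>\<^sub>L All a"
      by (rule AllI)
    then show "Neg (Disj (All a) c) # [All (Disj a (liftf 0 c))] \<turnstile>\<^sub>L Bot"
      by (intro NegE[OF nd_hd] DisjI1) simp
  qed
qed


lemma liftf_Ex_iter: "liftf j ((Ex ^^ k) c) = (Ex ^^ k) (liftf (j + k) c)"
  by (induction k arbitrary: j) auto

lemma liftf_All_iter: "liftf j ((All ^^ k) c) = (All ^^ k) (liftf (j + k) c)"
  by (induction k arbitrary: j) auto

lemma qfree_liftf: "qfree (liftf j a) = qfree a"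
  by (induction a arbitrary: j) auto

lemma level_liftf: "level b n a \<Longrightarrow> level b n (liftf j a)"
proof (induction n arbitrary: b a j)
  case 0
  then show ?case by (simp add: qfree_liftf)
next
  case (Suc n)
  show ?case
  proof (cases b)
    case True
    with Suc.prems obtain k c where "a = (Ex ^^ k) c" "level False n c" by auto
    then show ?thesis using True Suc.IH[of False c "j + k"] by (auto simp: liftf_Ex_iter)
  next
    case False
    with Suc.prems obtain k c where "a = (All ^^ k) c" "level True n c" by auto
    then show ?thesis using False Suc.IH[of True c "j + k"] by (auto simp: liftf_All_iter)
  qed
qed

lemma level_liftf_iter: "level b n a \<Longrightarrow> level b n ((liftf 0 ^^ k) a)"
  by (induction k) (auto intro: level_liftf)

lemma qfree_level: "qfree a \<Longrightarrow> level b n a"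
proof (induction n arbitrary: b)
  case 0
  then show ?case by simp
next
  case (Suc n)
  then show ?case by (cases b) (simp_all add: exI[of _ 0])
qed

lemma closedt_liftt: "closedt j t \<Longrightarrow> closedt (Suc j) (liftt i t)"
  by (induction t) auto

lemma closedf_liftf: "closedf j a \<Longrightarrow> closedf (Suc j) (liftf i a)"
  by (induction a arbitrary: i j) (auto simp: closedt_liftt)

lemma closedf_liftf_iter: "closedf j a \<Longrightarrow> closedf (j + k) ((liftf 0 ^^ k) a)"
  by (induction k) (auto intro: closedf_liftf)

definition prefixed :: "(('f, 'p) fm \<Rightarrow> ('f, 'p) fm) \<Rightarrow> (('f, 'p) fm \<Rightarrow> bool) \<Rightarrow> ('f, 'p) fm \<Rightarrow> bool"
  where "prefixed Q P a \<longleftrightarrow> (\<exists>k c. a = (Q ^^ k) c \<and> P c)"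

lemma level_Suc:
  "level True (Suc n) = prefixed Ex (level False n)"
  "level False (Suc n) = prefixed All (level True n)"
  by (simp_all add: fun_eq_iff prefixed_def)

text \<open>The closedness clause keeps the free variables of the combination among those of the
arguments, so that combinations of sentences are sentences.\<close>

definition closed_under_eqv ::
    "(('f, 'p) fm \<Rightarrow> ('f, 'p) fm \<Rightarrow> ('f, 'p) fm) \<Rightarrow> (('f, 'p) fm \<Rightarrow> bool) \<Rightarrow> bool" where
  "closed_under_eqv op P \<longleftrightarrow> (\<forall>x y. P x \<longrightarrow> P y \<longrightarrow>
     (\<exists>z. P z \<and> eqv z (op x y) \<and> (\<forall>j. closedf j x \<longrightarrow> closedf j y \<longrightarrow> closedf j z)))"

locale prenex_op =
  fixes Q :: "('f, 'p) fm \<Rightarrow> ('f, 'p) fm"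
    and op :: "('f, 'p) fm \<Rightarrow> ('f, 'p) fm \<Rightarrow> ('f, 'p) fm"
  assumes op_Q_eqv: "eqv (op (Q a) c) (Q (op a (liftf 0 c)))"
    and eqv_Q: "eqv a a' \<Longrightarrow> eqv (Q a) (Q a')"
    and eqv_op: "eqv a a' \<Longrightarrow> eqv (op a c) (op a' c)"
    and op_commute_eqv: "eqv (op a c) (op c a)"
    and closedf_Q: "closedf j (Q a) = closedf (Suc j) a"
    and closedf_op: "closedf j (op a c) \<longleftrightarrow> closedf j a \<and> closedf j c"
begin

lemma eqv_Q_iter: "eqv a a' \<Longrightarrow> eqv ((Q ^^ k) a) ((Q ^^ k) a')"
  by (induction k) (simp_all add: eqv_Q)

lemma closedf_Q_iter: "closedf j ((Q ^^ k) a) = closedf (j + k) a"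
  by (induction k arbitrary: j) (simp_all add: closedf_Q)

lemma op_Q_iter_eqv: "eqv (op ((Q ^^ k) a) c) ((Q ^^ k) (op a ((liftf 0 ^^ k) c)))"
proof (induction k arbitrary: c)
  case 0
  then show ?case by (simp add: eqv_refl)
next
  case (Suc k)
  have "eqv (op ((Q ^^ Suc k) a) c) (Q (op ((Q ^^ k) a) (liftf 0 c)))"
    using op_Q_eqv by simp
  also have "eqv \<dots> (Q ((Q ^^ k) (op a ((liftf 0 ^^ k) (liftf 0 c)))))"
    using Suc eqv_Q by blast
  finally show ?case
    by (simp add: funpow_swap1)
qed

lemma op_Q_iter_eqv_right: "eqv (op a ((Q ^^ k) c)) ((Q ^^ k) (op ((liftf 0 ^^ k) a) c))"
proof -
  have "eqv (op a ((Q ^^ k) c)) (op ((Q ^^ k) c) a)"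
    by (rule op_commute_eqv)
  also have "eqv \<dots> ((Q ^^ k) (op c ((liftf 0 ^^ k) a)))"
    by (rule op_Q_iter_eqv)
  also have "eqv \<dots> ((Q ^^ k) (op ((liftf 0 ^^ k) a) c))"
    by (rule eqv_Q_iter[OF op_commute_eqv])
  finally show ?thesis .
qed

text \<open>To combine \<open>Q\<^sup>k x'\<close> with \<open>y\<close>, first lift \<open>y\<close> past the \<open>k\<close> quantifiers, write the
result as \<open>Q\<^sup>m y'\<close>, and combine the matrices \<open>x'\<close> (lifted past \<open>m\<close> quantifiers) and \<open>y'\<close>.\<close>

lemma closed_under_eqv_prefixed:
  assumes P: "closed_under_eqv op P"
    and P_lift: "\<And>x k. P x \<Longrightarrow> P ((liftf 0 ^^ k) x)"
    and prefixed_lift: "\<And>x k. prefixed Q P x \<Longrightarrow> prefixed Q P ((liftf 0 ^^ k) x)"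
  shows "closed_under_eqv op (prefixed Q P)"
  unfolding closed_under_eqv_def
proof (intro allI impI)
  fix x y
  assume "prefixed Q P x" and "prefixed Q P y"
  then obtain k x' where x: "x = (Q ^^ k) x'" "P x'"
    unfolding prefixed_def by blast
  define y1 where "y1 = (liftf 0 ^^ k) y"
  have "prefixed Q P y1"
    unfolding y1_def by (rule prefixed_lift) fact
  then obtain m y' where y1: "y1 = (Q ^^ m) y'" "P y'"
    unfolding prefixed_def by blast
  obtain z where z: "P z" "eqv z (op ((liftf 0 ^^ m) x') y')"
    "\<forall>j. closedf j ((liftf 0 ^^ m) x') \<longrightarrow> closedf j y' \<longrightarrow> closedf j z"
    using P P_lift[OF x(2)] y1(2) unfolding closed_under_eqv_def by blast
  have QQ: "(Q ^^ (k + m)) z = (Q ^^ k) ((Q ^^ m) z)"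
    by (simp add: funpow_add)
  have "eqv (op x y) ((Q ^^ k) (op x' y1))"
    unfolding x(1) y1_def by (rule op_Q_iter_eqv)
  also have "eqv \<dots> ((Q ^^ k) ((Q ^^ m) (op ((liftf 0 ^^ m) x') y')))"
    unfolding y1(1) by (rule eqv_Q_iter[OF op_Q_iter_eqv_right])
  also have "eqv \<dots> ((Q ^^ k) ((Q ^^ m) z))"
    by (rule eqv_Q_iter[OF eqv_Q_iter[OF eqv_sym[OF z(2)]]])
  finally have "eqv ((Q ^^ (k + m)) z) (op x y)"
    unfolding QQ by (rule eqv_sym)
  moreover have "prefixed Q P ((Q ^^ (k + m)) z)"
    using z(1) unfolding prefixed_def by blast
  moreover have "closedf j ((Q ^^ (k + m)) z)" if "closedf j x" "closedf j y" for j
  proof -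
    have "closedf (j + k + m) ((liftf 0 ^^ m) x')"
      using that(1) x(1) closedf_liftf_iter by (simp add: closedf_Q_iter)
    moreover have "closedf (j + k + m) y'"
      using closedf_liftf_iter[OF that(2), of k] y1 by (simp add: y1_def closedf_Q_iter)
    ultimately show ?thesis
      using z(3) by (simp add: closedf_Q_iter add.assoc)
  qed
  ultimately show "\<exists>z. prefixed Q P z \<and> eqv z (op x y) \<and>
      (\<forall>j. closedf j x \<longrightarrow> closedf j y \<longrightarrow> closedf j z)"
    by blast
qed

end

interpretation Ex_Conj: prenex_op Ex Conj
  by unfold_locales (simp_all add: Conj_Ex_eqv eqv_Ex eqv_Conj Conj_commute_eqv)

interpretation Ex_Disj: prenex_op Ex Disj
  by unfold_locales (simp_all add: Disj_Ex_eqv eqv_Ex eqv_Disj Disj_commute_eqv)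

interpretation All_Conj: prenex_op All Conj
  by unfold_locales (simp_all add: Conj_All_eqv eqv_All eqv_Conj Conj_commute_eqv)

interpretation All_Disj: prenex_op All Disj
  by unfold_locales (simp_all add: Disj_All_eqv eqv_All eqv_Disj Disj_commute_eqv)

lemma level_closed_under_eqv:
  fixes b :: bool and n :: nat
  defines "L \<equiv> level b n :: ('f, 'p) fm \<Rightarrow> bool"
  shows "closed_under_eqv Conj L \<and> closed_under_eqv Disj L"
  unfolding L_def
proof (induction n arbitrary: b)
  case 0
  show ?case
    unfolding closed_under_eqv_def level.simps
  proof (intro conjI allI impI)
    fix x y :: "('f, 'p) fm"
    assume "qfree x" "qfree y"
    then show "\<exists>z. qfree z \<and> eqv z (Conj x y) \<and> (\<forall>j. closedf j x \<longrightarrow> closedf j y \<longrightarrow> closedf j z)"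
      and "\<exists>z. qfree z \<and> eqv z (Disj x y) \<and> (\<forall>j. closedf j x \<longrightarrow> closedf j y \<longrightarrow> closedf j z)"
      by (simp_all add: exI[of _ "Conj x y"] exI[of _ "Disj x y"] eqv_refl)
  qed
next
  case (Suc n)
  have lift: "\<And>x :: ('f, 'p) fm. \<And>k. level b n x \<Longrightarrow> level b n ((liftf 0 ^^ k) x)" for b
    by (rule level_liftf_iter)
  have lift_Ex: "\<And>x :: ('f, 'p) fm. \<And>k. prefixed Ex (level False n) x \<Longrightarrow>
      prefixed Ex (level False n) ((liftf 0 ^^ k) x)"
    and lift_All: "\<And>x :: ('f, 'p) fm. \<And>k. prefixed All (level True n) x \<Longrightarrow>
      prefixed All (level True n) ((liftf 0 ^^ k) x)"
    using level_liftf_iter[of True "Suc n"] level_liftf_iter[of False "Suc n"]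
    by (simp_all only: level_Suc)
  show ?case
  proof (cases b)
    case True
    have "closed_under_eqv Conj (prefixed Ex (level False n :: ('f, 'p) fm \<Rightarrow> bool))"
      using Suc.IH[of False] by (intro Ex_Conj.closed_under_eqv_prefixed) (simp_all add: lift lift_Ex)
    moreover have "closed_under_eqv Disj (prefixed Ex (level False n :: ('f, 'p) fm \<Rightarrow> bool))"
      using Suc.IH[of False] by (intro Ex_Disj.closed_under_eqv_prefixed) (simp_all add: lift lift_Ex)
    ultimately show ?thesis
      by (simp add: True level_Suc)
  next
    case False
    have "closed_under_eqv Conj (prefixed All (level True n :: ('f, 'p) fm \<Rightarrow> bool))"
      using Suc.IH[of True] by (intro All_Conj.closed_under_eqv_prefixed) (simp_all add: lift lift_All)
    moreover have "closed_under_eqv Disj (prefixed All (level True n :: ('f, 'p) fm \<Rightarrow> bool))"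
      using Suc.IH[of True] by (intro All_Disj.closed_under_eqv_prefixed) (simp_all add: lift lift_All)
    ultimately show ?thesis
      by (simp add: False level_Suc)
  qed
qed


lemma level_sentences_sentence: "a \<in> level_sentences b n \<Longrightarrow> sentence a"
  by (simp add: level_sentences_def)

lemma level_sentences_Conj_Disj:
  assumes "x \<in> level_sentences b n" "y \<in> level_sentences b n"
  shows "\<exists>z\<in>level_sentences b n. eqv z (Conj x y)"
    and "\<exists>z\<in>level_sentences b n. eqv z (Disj x y)"
  using level_closed_under_eqv[of b n] assms
  unfolding closed_under_eqv_def level_sentences_def sentence_def by blast+

lemma Bot_level_sentences: "Bot \<in> level_sentences b n"
  and Neg_Bot_level_sentences: "Neg Bot \<in> level_sentences b n"
  by (simp_all add: level_sentences_def sentence_def qfree_level)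

lemma provesI: "set G \<subseteq> A \<Longrightarrow> G \<turnstile>\<^sub>L a \<Longrightarrow> A \<turnstile> a"
  unfolding proves_def by blast

lemma proves_mono: "A \<turnstile> a \<Longrightarrow> A \<subseteq> B \<Longrightarrow> B \<turnstile> a"
  unfolding proves_def by blast

lemma proves_assm: "a \<in> A \<Longrightarrow> A \<turnstile> a"
  by (rule provesI[of "[a]"]) (auto intro: nd_hd)

lemma proves_rule: "A \<turnstile> a \<Longrightarrow> (\<And>H. H \<turnstile>\<^sub>L a \<Longrightarrow> H \<turnstile>\<^sub>L c) \<Longrightarrow> A \<turnstile> c"
  unfolding proves_def by blast

lemma proves_rule2:
  assumes "A \<turnstile> a" "A \<turnstile> b" and rule: "\<And>H. H \<turnstile>\<^sub>L a \<Longrightarrow> H \<turnstile>\<^sub>L b \<Longrightarrow> H \<turnstile>\<^sub>L c"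
  shows "A \<turnstile> c"
proof -
  obtain G1 G2 where "set G1 \<subseteq> A" "G1 \<turnstile>\<^sub>L a" "set G2 \<subseteq> A" "G2 \<turnstile>\<^sub>L b"
    using assms(1,2) unfolding proves_def by blast
  then have "G1 @ G2 \<turnstile>\<^sub>L a" "G1 @ G2 \<turnstile>\<^sub>L b" and "set (G1 @ G2) \<subseteq> A"
    by (auto elim: nd_weaken)
  then show ?thesis
    using rule by (blast intro: provesI)
qed

lemma proves_insertE:
  assumes "insert x A \<turnstile> y"
  obtains G where "set G \<subseteq> A" "x # G \<turnstile>\<^sub>L y"
proof -
  from assms obtain G where G: "set G \<subseteq> insert x A" "G \<turnstile>\<^sub>L y"
    unfolding proves_def by blast
  have "x # filter (\<lambda>g. g \<noteq> x) G \<turnstile>\<^sub>L y"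
    using G(2) by (rule nd_weaken) auto
  moreover have "set (filter (\<lambda>g. g \<noteq> x) G) \<subseteq> A"
    using G(1) by auto
  ultimately show thesis using that by blast
qed

lemma proves_NegI: "insert x A \<turnstile> Bot \<Longrightarrow> A \<turnstile> Neg x"
  by (erule proves_insertE) (auto intro: provesI NegI)

lemma proves_Classical: "insert (Neg x) A \<turnstile> Bot \<Longrightarrow> A \<turnstile> x"
  by (erule proves_insertE) (auto intro: provesI Classical)

lemma proves_ImpI: "insert x A \<turnstile> y \<Longrightarrow> A \<turnstile> Imp x y"
  by (erule proves_insertE) (auto intro: provesI ImpI)

lemma proves_NegE: "A \<turnstile> a \<Longrightarrow> A \<turnstile> Neg a \<Longrightarrow> A \<turnstile> Bot"
  by (rule proves_rule2[of A "Neg a" a]) (auto intro: NegE)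

lemma proves_insert_cut:
  assumes "G \<turnstile>\<^sub>L a" "\<forall>g\<in>set G. g \<notin> X \<longrightarrow> [\<chi>] \<turnstile>\<^sub>L g"
  shows "insert \<chi> X \<turnstile> a"
proof -
  let ?H = "\<chi> # filter (\<lambda>g. g \<in> X) G"
  have "\<forall>g\<in>set G. ?H \<turnstile>\<^sub>L g"
  proof
    fix g
    assume g: "g \<in> set G"
    show "?H \<turnstile>\<^sub>L g"
    proof (cases "g \<in> X")
      case True
      then show ?thesis using g by (auto intro: Assum)
    next
      case False
      then have "[\<chi>] \<turnstile>\<^sub>L g" using g assms(2) by blast
      then show ?thesis using nd_hd by (rule nd_cut1)
    qed
  qed
  then have "?H \<turnstile>\<^sub>L a"
    using assms(1) nd_cut by blast
  then show ?thesis
    by (rule provesI[rotated]) auto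
qed

lemma Lindenbaum:
  fixes X :: "('f, 'p) fm set"
  assumes "is_theory X" "consistent X"
  obtains M where "complete_consistent_theory M" "X \<subseteq> M"
proof -
  let ?F = "{Y. X \<subseteq> Y \<and> is_theory Y \<and> consistent Y}"
  have "\<exists>M\<in>?F. \<forall>Y\<in>?F. M \<subseteq> Y \<longrightarrow> Y = M"
  proof (rule subset_Zorn_nonempty)
    show "?F \<noteq> {}" using assms by blast
    fix C
    assume C: "C \<noteq> {}" "subset.chain ?F C"
    have sub: "C \<subseteq> ?F" using C(2) by (simp add: subset_chain_def)
    have "consistent (\<Union>C)" unfolding consistent_def
    proof
      assume "\<Union>C \<turnstile> Bot"
      then obtain G where G: "set G \<subseteq> \<Union>C" "G \<turnstile>\<^sub>L Bot" unfolding proves_def by blast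
      obtain B where "B \<in> C" "set G \<subseteq> B"
        using finite_subset_Union_chain[OF _ G(1) C(1) C(2)] by blast
      then show False
        using sub G(2) unfolding consistent_def by (blast intro: provesI)
    qed
    then show "\<Union>C \<in> ?F"
      using C sub unfolding is_theory_def by blast
  qed
  then obtain M where M: "M \<in> ?F" and max: "\<forall>Y\<in>?F. M \<subseteq> Y \<longrightarrow> Y = M" by blast
  then have thM: "is_theory M" and cM: "consistent M" by auto
  have mem: "a \<in> M" if "sentence a" "consistent (insert a M)" for a
  proof -
    have "insert a M \<in> ?F"
      using M that unfolding is_theory_def by auto
    then show ?thesis using max by blast
  qed
  have closed: "a \<in> M" if "sentence a" "M \<turnstile> a" for a
  proof (rule mem[OF that(1)])
    show "consistent (insert a M)"
      unfolding consistent_def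
    proof
      assume "insert a M \<turnstile> Bot"
      then have "M \<turnstile> Neg a" by (rule proves_NegI)
      with that(2) have "M \<turnstile> Bot" by (rule proves_NegE)
      then show False using cM unfolding consistent_def by simp
    qed
  qed
  have "complete_consistent_theory M"
    unfolding complete_consistent_theory_def
  proof (intro conjI allI impI)
    show "ded_closure M = M"
      unfolding ded_closure_def using closed thM proves_assm unfolding is_theory_def by blast
    fix a :: "('f, 'p) fm"
    assume a: "sentence a"
    have "Neg a \<in> M" if "a \<notin> M"
    proof -
      have "insert a M \<turnstile> Bot"
        using mem a that unfolding consistent_def by blast
      then have "M \<turnstile> Neg a" by (rule proves_NegI)
      then show ?thesis
        using closed a by (simp add: sentence_def)
    qed
    then show "a \<in> M \<or> Neg a \<in> M" by blast
  qed fact+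
  then show thesis using M that by blast
qed

lemma level_sentences_Conj_list:
  assumes "set C \<subseteq> level_sentences b n" "\<forall>c\<in>set C. Y \<turnstile> c"
  shows "\<exists>\<chi>\<in>level_sentences b n. Y \<turnstile> \<chi> \<and> (\<forall>c\<in>set C. [\<chi>] \<turnstile>\<^sub>L c)"
  using assms
proof (induction C)
  case Nil
  have "Y \<turnstile> Neg Bot" by (rule provesI[of "[]"]) (auto intro: nd_Neg_Bot)
  then show ?case using Neg_Bot_level_sentences by auto
next
  case (Cons c C)
  then obtain \<chi>' where \<chi>': "\<chi>' \<in> level_sentences b n" "Y \<turnstile> \<chi>'" "\<forall>d\<in>set C. [\<chi>'] \<turnstile>\<^sub>L d"
    by auto
  have c: "c \<in> level_sentences b n" "Y \<turnstile> c" using Cons.prems by auto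
  obtain \<chi> where \<chi>: "\<chi> \<in> level_sentences b n" "eqv \<chi> (Conj c \<chi>')"
    using level_sentences_Conj_Disj(1)[OF c(1) \<chi>'(1)] by blast
  have "Y \<turnstile> Conj c \<chi>'" using c(2) \<chi>'(2) by (rule proves_rule2) (rule ConjI)
  then have "Y \<turnstile> \<chi>" by (rule proves_rule) (rule eqvD[OF eqv_sym[OF \<chi>(2)]])
  moreover have \<chi>c: "[\<chi>] \<turnstile>\<^sub>L Conj c \<chi>'" using eqvD[OF \<chi>(2) nd_hd] .
  moreover have "[\<chi>] \<turnstile>\<^sub>L c" using ConjE1[OF \<chi>c] .
  moreover have "[\<chi>] \<turnstile>\<^sub>L d" if "d \<in> set C" for d
    using \<chi>'(3) that ConjE2[OF \<chi>c] nd_cut1 by blast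
  ultimately show ?case using \<chi>(1) by auto
qed

lemma level_sentences_Neg_Disj_list:
  assumes "set D \<subseteq> level_sentences b n" "\<forall>d\<in>set D. Y \<turnstile> Neg d"
  shows "\<exists>\<chi>\<in>level_sentences b n. Y \<turnstile> Neg \<chi> \<and> (\<forall>d\<in>set D. [Neg \<chi>] \<turnstile>\<^sub>L Neg d)"
  using assms
proof (induction D)
  case Nil
  have "Y \<turnstile> Neg Bot" by (rule provesI[of "[]"]) (auto intro: nd_Neg_Bot)
  then show ?case using Bot_level_sentences by auto
next
  case (Cons d D)
  then obtain \<chi>' where \<chi>': "\<chi>' \<in> level_sentences b n" "Y \<turnstile> Neg \<chi>'" "\<forall>e\<in>set D. [Neg \<chi>'] \<turnstile>\<^sub>L Neg e"
    by auto
  have d: "d \<in> level_sentences b n" "Y \<turnstile> Neg d" using Cons.prems by auto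
  obtain \<chi> where \<chi>: "\<chi> \<in> level_sentences b n" "eqv \<chi> (Disj d \<chi>')"
    using level_sentences_Conj_Disj(2)[OF d(1) \<chi>'(1)] by blast
  have e: "eqv (Neg \<chi>) (Neg (Disj d \<chi>'))" using eqv_Neg[OF \<chi>(2)] .
  have "Y \<turnstile> Neg (Disj d \<chi>')" using d(2) \<chi>'(2) by (rule proves_rule2) (rule nd_Neg_Disj)
  then have "Y \<turnstile> Neg \<chi>" by (rule proves_rule) (rule eqvD[OF eqv_sym[OF e]])
  moreover have \<chi>d: "[Neg \<chi>] \<turnstile>\<^sub>L Neg (Disj d \<chi>')" using eqvD[OF e nd_hd] .
  moreover have "[Neg \<chi>] \<turnstile>\<^sub>L Neg d" using nd_Neg_DisjD1[OF \<chi>d] .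
  moreover have "[Neg \<chi>] \<turnstile>\<^sub>L Neg e" if "e \<in> set D" for e
    using \<chi>'(3) that nd_Neg_DisjD2[OF \<chi>d] nd_cut1 by blast
  ultimately show ?case using \<chi>(1) by auto
qed

lemma refute_with_level_consequences:
  assumes "S \<union> C \<turnstile> Bot" "C \<subseteq> level_sentences b n" "\<forall>c\<in>C. Y \<turnstile> c"
  shows "\<exists>\<chi>\<in>level_sentences b n. Y \<turnstile> \<chi> \<and> S \<turnstile> Neg \<chi>"
proof -
  obtain G where G: "set G \<subseteq> S \<union> C" "G \<turnstile>\<^sub>L Bot"
    using assms(1) unfolding proves_def by blast
  let ?C = "filter (\<lambda>g. g \<notin> S) G"
  obtain \<chi> where \<chi>: "\<chi> \<in> level_sentences b n" "Y \<turnstile> \<chi>" "\<forall>c\<in>set ?C. [\<chi>] \<turnstile>\<^sub>L c"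
    using level_sentences_Conj_list[of ?C b n Y] G(1) assms(2,3) by auto
  have "insert \<chi> S \<turnstile> Bot"
    using G(2) by (rule proves_insert_cut) (use \<chi>(3) in auto)
  then show ?thesis
    using \<chi>(1,2) proves_NegI by blast
qed

lemma refute_with_negated_level_consequences:
  assumes "X \<union> Neg ` D \<turnstile> Bot" "D \<subseteq> level_sentences b n" "\<forall>d\<in>D. Y \<turnstile> Neg d"
  shows "\<exists>\<chi>\<in>level_sentences b n. Y \<turnstile> Neg \<chi> \<and> X \<turnstile> \<chi>"
proof -
  obtain G where G: "set G \<subseteq> X \<union> Neg ` D" "G \<turnstile>\<^sub>L Bot"
    using assms(1) unfolding proves_def by blast
  have "set (filter (\<lambda>g. g \<notin> X) G) \<subseteq> Neg ` D"
    using G(1) by auto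
  then obtain D0 where D0: "D0 \<subseteq> D" "finite D0" "set (filter (\<lambda>g. g \<notin> X) G) = Neg ` D0"
    by (rule finite_subset_image[OF finite_set, THEN exE]) blast
  then obtain D' where D': "set D' = D0"
    using finite_list by blast
  obtain \<chi> where \<chi>: "\<chi> \<in> level_sentences b n" "Y \<turnstile> Neg \<chi>" "\<forall>d\<in>D0. [Neg \<chi>] \<turnstile>\<^sub>L Neg d"
    using level_sentences_Neg_Disj_list[of D' b n Y] D' D0(1) assms(2,3) by auto
  have "[Neg \<chi>] \<turnstile>\<^sub>L g" if "g \<in> set G" "g \<notin> X" for g
  proof -
    have "g \<in> set (filter (\<lambda>g. g \<notin> X) G)"
      using that by simp
    then have "g \<in> Neg ` D0"
      using D0(3) by (simp only:)
    then show ?thesis using \<chi>(3) by blast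
  qed
  then have "insert (Neg \<chi>) X \<turnstile> Bot"
    using G(2) proves_insert_cut by blast
  then show ?thesis
    using \<chi>(1,2) proves_Classical by blast
qed

lemma level_separated_completions:
  fixes b :: bool and n :: nat and A T :: "('f, 'p) fm set"
  defines "\<Lambda> \<equiv> level_sentences b n"
  assumes "is_theory A" "sentence \<phi>" "is_theory T"
    and cons: "consistent (T \<union> A \<union> {\<phi>} \<union> Th \<Lambda> (A \<union> {Neg \<phi>}))"
  shows "\<exists>Tp Tm. complete_consistent_theory Tp \<and> A \<union> {\<phi>} \<subseteq> Tp \<and> T \<subseteq> Tp \<and>
                 complete_consistent_theory Tm \<and> A \<union> {Neg \<phi>} \<subseteq> Tm \<and>
                 \<Lambda> \<inter> Tm \<subseteq> \<Lambda> \<inter> Tp"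
proof -
  define S where "S = T \<union> A \<union> {\<phi>}"
  define X where "X = A \<union> {Neg \<phi>}"
  define \<Psi> where "\<Psi> = {\<psi> \<in> \<Lambda>. S \<turnstile> Neg \<psi>}"
  have "consistent (X \<union> Neg ` \<Psi>)"
    unfolding consistent_def
  proof
    assume "X \<union> Neg ` \<Psi> \<turnstile> Bot"
    then obtain \<chi> where \<chi>: "\<chi> \<in> \<Lambda>" "S \<turnstile> Neg \<chi>" "X \<turnstile> \<chi>"
      using refute_with_negated_level_consequences[of X \<Psi> b n S] unfolding \<Psi>_def \<Lambda>_def by blast
    then have "\<chi> \<in> Th \<Lambda> X"
      using level_sentences_sentence unfolding Th_def ded_closure_def \<Lambda>_def by blast
    then have "S \<union> Th \<Lambda> X \<turnstile> \<chi>" and "S \<union> Th \<Lambda> X \<turnstile> Neg \<chi>"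
      using \<chi>(2) by (auto intro: proves_assm elim: proves_mono)
    then have "S \<union> Th \<Lambda> X \<turnstile> Bot" by (rule proves_NegE)
    then show False using cons unfolding consistent_def S_def X_def by simp
  qed
  moreover have "is_theory (X \<union> Neg ` \<Psi>)"
    using assms(2,3) level_sentences_sentence
    unfolding is_theory_def X_def \<Psi>_def \<Lambda>_def by (auto simp: sentence_def)
  ultimately obtain Tm where Tm: "complete_consistent_theory Tm" "X \<union> Neg ` \<Psi> \<subseteq> Tm"
    using Lindenbaum by blast
  have "consistent (S \<union> (\<Lambda> \<inter> Tm))"
    unfolding consistent_def
  proof
    assume "S \<union> (\<Lambda> \<inter> Tm) \<turnstile> Bot"
    then obtain \<chi> where \<chi>: "\<chi> \<in> \<Lambda>" "Tm \<turnstile> \<chi>" "S \<turnstile> Neg \<chi>"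
      using refute_with_level_consequences[of S "\<Lambda> \<inter> Tm" b n Tm]
      unfolding \<Lambda>_def by (blast intro: proves_assm)
    then have "Tm \<turnstile> Neg \<chi>"
      using Tm(2) unfolding \<Psi>_def by (blast intro: proves_assm)
    with \<chi>(2) have "Tm \<turnstile> Bot" by (rule proves_NegE)
    then show False
      using Tm(1) unfolding complete_consistent_theory_def consistent_def by blast
  qed
  moreover have "is_theory (S \<union> (\<Lambda> \<inter> Tm))"
    using assms(2,3,4) Tm(1)
    unfolding is_theory_def S_def complete_consistent_theory_def by auto
  ultimately obtain Tp where Tp: "complete_consistent_theory Tp" "S \<union> (\<Lambda> \<inter> Tm) \<subseteq> Tp"
    using Lindenbaum by blast
  show ?thesis
    by (rule exI[of _ Tp], rule exI[of _ Tm]) (use Tp Tm in \<open>auto simp: S_def X_def\<close>)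
qed

lemma consistent_with_level_consequences_of_Neg:
  fixes b :: bool and n :: nat and A :: "('f, 'p) fm set"
  defines "\<Lambda> \<equiv> level_sentences b n"
  assumes "\<forall>\<psi>\<in>neg_set \<Lambda>. \<not> A \<turnstile> Iff \<phi> \<psi>"
  shows "consistent (A \<union> {\<phi>} \<union> Th \<Lambda> (A \<union> {Neg \<phi>}))"
  unfolding consistent_def
proof
  assume "A \<union> {\<phi>} \<union> Th \<Lambda> (A \<union> {Neg \<phi>}) \<turnstile> Bot"
  then obtain \<chi> where \<chi>: "\<chi> \<in> \<Lambda>" "A \<union> {Neg \<phi>} \<turnstile> \<chi>" "A \<union> {\<phi>} \<turnstile> Neg \<chi>"
    using refute_with_level_consequences[of "A \<union> {\<phi>}" "Th \<Lambda> (A \<union> {Neg \<phi>})" b n "A \<union> {Neg \<phi>}"]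
    unfolding Th_def ded_closure_def \<Lambda>_def by blast
  have imp1: "A \<turnstile> Imp \<phi> (Neg \<chi>)"
    using \<chi>(3) by (intro proves_ImpI) simp
  have "insert (Neg \<phi>) (insert (Neg \<chi>) A) \<turnstile> Bot"
    by (rule proves_NegE[OF proves_mono[OF \<chi>(2)] proves_assm]) auto
  then have imp2: "A \<turnstile> Imp (Neg \<chi>) \<phi>"
    by (rule proves_ImpI[OF proves_Classical])
  have "A \<turnstile> Iff \<phi> (Neg \<chi>)"
    using imp1 imp2 unfolding Iff_def by (rule proves_rule2) (rule ConjI)
  moreover have "Neg \<chi> \<in> neg_set \<Lambda>"
  proof -
    have "{} \<turnstile> Iff (Neg \<chi>) (Neg \<chi>)"
      unfolding Iff_def by (rule provesI[of "[]"]) (auto intro!: ConjI ImpI nd_hd)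
    then show ?thesis
      using \<chi>(1) level_sentences_sentence unfolding neg_set_def \<Lambda>_def by (auto simp: sentence_def)
  qed
  ultimately show False
    using assms(2) by blast
qed

theorem lemma4p5:
  fixes b :: bool and n :: nat
    and A :: "('f, 'p) fm set" and \<phi> :: "('f, 'p) fm"
  defines "\<Lambda> \<equiv> level_sentences b n"
  assumes "is_theory A"
    and "sentence \<phi>"
    and "\<forall>\<psi>\<in>neg_set \<Lambda>. \<not> A \<turnstile> Iff \<phi> \<psi>"
  shows "(\<exists>Tp Tm. complete_consistent_theory Tp \<and> A \<union> {\<phi>} \<subseteq> Tp \<and>
                 complete_consistent_theory Tm \<and> A \<union> {Neg \<phi>} \<subseteq> Tm \<and>
                 \<Lambda> \<inter> Tm \<subseteq> \<Lambda> \<inter> Tp)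
       \<and> (\<forall>T. is_theory T \<longrightarrow> consistent (T \<union> A \<union> {\<phi>} \<union> Th \<Lambda> (A \<union> {Neg \<phi>})) \<longrightarrow>
            (\<exists>Tp Tm. complete_consistent_theory Tp \<and> A \<union> {\<phi>} \<subseteq> Tp \<and> T \<subseteq> Tp \<and>
                 complete_consistent_theory Tm \<and> A \<union> {Neg \<phi>} \<subseteq> Tm \<and>
                 \<Lambda> \<inter> Tm \<subseteq> \<Lambda> \<inter> Tp))"
proof
  have "consistent ({} \<union> A \<union> {\<phi>} \<union> Th \<Lambda> (A \<union> {Neg \<phi>}))"
    using consistent_with_level_consequences_of_Neg assms(4) unfolding \<Lambda>_def by simp
  then show "\<exists>Tp Tm. complete_consistent_theory Tp \<and> A \<union> {\<phi>} \<subseteq> Tp \<and>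
      complete_consistent_theory Tm \<and> A \<union> {Neg \<phi>} \<subseteq> Tm \<and> \<Lambda> \<inter> Tm \<subseteq> \<Lambda> \<inter> Tp"
    using level_separated_completions[OF assms(2,3), of "{}"]
    unfolding \<Lambda>_def is_theory_def by blast
  show "\<forall>T. is_theory T \<longrightarrow> consistent (T \<union> A \<union> {\<phi>} \<union> Th \<Lambda> (A \<union> {Neg \<phi>})) \<longrightarrow>
      (\<exists>Tp Tm. complete_consistent_theory Tp \<and> A \<union> {\<phi>} \<subseteq> Tp \<and> T \<subseteq> Tp \<and>
        complete_consistent_theory Tm \<and> A \<union> {Neg \<phi>} \<subseteq> Tm \<and> \<Lambda> \<inter> Tm \<subseteq> \<Lambda> \<inter> Tp)"
    using level_separated_completions[OF assms(2,3)] unfolding \<Lambda>_def by blast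
qed

end
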